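(* Let $\mu$ be a probability measure on $\mathbb{C}$ with $\int|z|^n\,d\mu<\infty$ for all $n$, and let $\Phi_n$ be its monic orthogonal polynomials. Suppose $z_0$ is a pure point of $\mu$ and $\delta=\mathrm{dist}\bigl(z_0,\mathrm{cvh}(\mathrm{supp}(\mu)\setminus\{z_0\})\bigr)>0$. Then each $\Phi_n$ has at most one zero in $\{z:|z-z_0|<\delta/2\}$.
   Context: $\Phi_n$ is the monic polynomial of degree $n$ orthogonal in $L^2(\mathbb{C},d\mu)$ to all polynomials of degree less than $n$ (defined whenever $\mathrm{supp}\,\mu$ has at least $n$ points). $\mathrm{cvh}$ denotes convex hull. *)

theory Defs
  imports "HOL-Probability.Probability" "HOL-Computational_Algebra.Polynomial"
begin

definition msupp :: "complex measure \<Rightarrow> complex set" where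
  "msupp \<mu> = {z. \<forall>e>0. emeasure \<mu> (ball z e) > 0}"

definition poly_inner :: "complex measure \<Rightarrow> complex poly \<Rightarrow> complex poly \<Rightarrow> complex" where
  "poly_inner \<mu> f g = (\<integral>z. poly f z * cnj (poly g z) \<partial>\<mu>)"

definition is_monic_OP :: "complex measure \<Rightarrow> nat \<Rightarrow> complex poly \<Rightarrow> bool" where
  "is_monic_OP \<mu> n p \<longleftrightarrow> degree p = n \<and> lead_coeff p = 1 \<and>
     (\<forall>q. degree q < n \<longrightarrow> poly_inner \<mu> p q = 0)"

text \<open>Phi_n: the (unique, when supp mu has at least n points) monic orthogonal polynomial.\<close>
definition Phi :: "complex measure \<Rightarrow> nat \<Rightarrow> complex poly" where
  "Phi \<mu> n = (THE p. is_monic_OP \<mu> n p)"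

end

theory Submission
  imports Defs
begin

(*
  If Phi_n had two zeros z1, z2 (counted with multiplicity) in the disc |z - z0| < delta/2,
  write Phi_n = (z - z1) (z - z2) q.  The polynomial (z - z0) q has degree n - 1, so it is
  orthogonal to Phi_n, i.e. the integral of (z - z1) (z - z2) conj (z - z0) |q|^2 vanishes.
  Let v be the unit vector from z0 towards the point of cvh(supp mu - {z0}) nearest to z0;
  then supp mu - {z0} lies in the half-plane Re ((z - z0) conj v) >= delta.  On that
  half-plane Re ((z - z1) (z - z2) conj (z - z0) conj v) > 0, because z1 and z2 are within
  delta/2 of z0.  So the real part of the rotated integrand is nonnegative on supp mu and
  its integral is zero; hence (z - z0) q vanishes on supp mu, which a nonzero polynomial of
  degree less than n cannot do when supp mu has at least n points.
*)

lemma norm_inverse_diff_le_if_Re_ge: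
  fixes w :: complex and d :: real
  assumes "d > 0" "Re w \<ge> d"
  shows "cmod (1 / w - 1 / (2 * d)) \<le> 1 / (2 * d)"
proof -
  have w0: "w \<noteq> 0" using assms by auto
  have "d * d \<le> d * Re w" using assms by (intro mult_left_mono) auto
  then have "(cmod (2 * d - w))\<^sup>2 \<le> (cmod w)\<^sup>2"
    unfolding cmod_power2 by (simp add: power2_eq_square algebra_simps)
  then have "cmod (2 * d - w) \<le> cmod w" by (rule power2_le_imp_le) simp
  moreover have "1 / w - 1 / (2 * d) = (2 * d - w) / (2 * d * w)"
    using w0 assms(1) by (simp add: field_simps)
  ultimately show ?thesis
    using w0 assms(1) by (simp add: norm_divide norm_mult divide_simps)
qed

lemma Re_mult_cnj_le_norm: "Re (a * cnj b) \<le> cmod a * cmod b"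
  by (metis complex_Re_le_cmod complex_mod_cnj norm_mult)

lemma Re_two_factors_mult_cnj_pos:
  fixes w a b :: complex and d :: real
  assumes d: "d > 0" and w: "Re w \<ge> d" and a: "cmod a < d / 2" and b: "cmod b < d / 2"
  shows "Re ((w - a) * (w - b) * cnj w) > 0"
proof -
  have w0: "w \<noteq> 0" using d w by auto
  have "Re (a * b * (1 / w - 1 / (2 * d))) \<ge> - (cmod a * cmod b / (2 * d))"
  proof -
    have "cmod (a * b * (1 / w - 1 / (2 * d))) \<le> cmod a * cmod b * (1 / (2 * d))"
      unfolding norm_mult using norm_inverse_diff_le_if_Re_ge[OF d w]
      by (intro mult_left_mono) auto
    then show ?thesis using abs_Re_le_cmod[of "a * b * (1 / w - 1 / (2 * d))"] by simp
  qed
  moreover have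
    "(w - a) * (w - b) / w = w - a - b + a * b / (2 * d) + a * b * (1 / w - 1 / (2 * d))"
    using w0 d by (simp add: field_simps)
  ultimately have Re_quotient:
    "d - Re a - Re b + (Re (a * b) - cmod a * cmod b) / (2 * d) \<le> Re ((w - a) * (w - b) / w)"
    using w by (simp add: diff_divide_distrib)
  have "cmod a < d - Re a" "cmod b < d - Re b"
    using a b complex_Re_le_cmod[of a] complex_Re_le_cmod[of b] by linarith+
  then have "cmod a * cmod b < (d - Re a) * (d - Re b)"
    by (intro mult_strict_mono') auto
  then have "0 < (2 * ((d - Re a) * (d - Re b)) - Re (a * cnj b) - cmod a * cmod b) / (2 * d)"
    using d Re_mult_cnj_le_norm[of a b] by (intro divide_pos_pos) linarith+
  also have "\<dots> = d - Re a - Re b + (Re (a * b) - cmod a * cmod b) / (2 * d)"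
    using d by (simp add: field_simps)
  also note Re_quotient
  finally show ?thesis by (simp only: Re_complex_div_gt_0)
qed

lemma Re_two_roots_mult_cnj_pos:
  fixes z z\<^sub>0 z\<^sub>1 z\<^sub>2 v :: complex and d :: real
  assumes v: "norm v = 1" and d: "d > 0" and z: "d \<le> (z - z\<^sub>0) \<bullet> v"
    and z\<^sub>1: "dist z\<^sub>1 z\<^sub>0 < d / 2" and z\<^sub>2: "dist z\<^sub>2 z\<^sub>0 < d / 2"
  shows "Re ((z - z\<^sub>1) * (z - z\<^sub>2) * cnj (z - z\<^sub>0) * cnj v) > 0"
proof -
  define w a b
    where "w = (z - z\<^sub>0) * cnj v" and "a = (z\<^sub>1 - z\<^sub>0) * cnj v" and "b = (z\<^sub>2 - z\<^sub>0) * cnj v"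
  have "Re ((w - a) * (w - b) * cnj w) > 0"
  proof (rule Re_two_factors_mult_cnj_pos[OF d])
    show "d \<le> Re w" using z by (simp add: w_def inner_complex_def)
    show "cmod a < d / 2" "cmod b < d / 2"
      using v z\<^sub>1 z\<^sub>2 by (simp_all add: a_def b_def norm_mult dist_norm)
  qed
  moreover have
    "(w - a) * (w - b) * cnj w = (z - z\<^sub>1) * (z - z\<^sub>2) * cnj (z - z\<^sub>0) * cnj v * (v * cnj v)"
    unfolding w_def a_def b_def by (simp add: algebra_simps)
  moreover have "v * cnj v = 1" using complex_norm_square[of v] v by simp
  ultimately show ?thesis by simp
qed

lemma separating_unit_vector:
  fixes z\<^sub>0 :: "'a::euclidean_space" and T :: "'a set"
  defines "d \<equiv> infdist z\<^sub>0 (convex hull T)"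
  assumes d: "d > 0"
  obtains v where "norm v = 1" "\<And>s. s \<in> T \<Longrightarrow> d \<le> (s - z\<^sub>0) \<bullet> v"
proof -
  define C where "C = closure (convex hull T)"
  have "T \<noteq> {}" using d by (auto simp: d_def infdist_def)
  then have "C \<noteq> {}" "closed C" "convex C" by (auto simp: C_def convex_closure)
  moreover have "infdist z\<^sub>0 C = d" by (simp add: C_def d_def infdist_eq_setdist)
  ultimately obtain p
    where p: "p \<in> C" "dist z\<^sub>0 p = d" "\<And>y. y \<in> C \<Longrightarrow> dist z\<^sub>0 p \<le> dist z\<^sub>0 y"
    by (metis infdist_attains_inf infdist_le)
  define e where "e = p - z\<^sub>0"
  have e: "norm e = d" using p(2) by (simp add: e_def dist_norm norm_minus_commute)
  have "d * d \<le> (s - z\<^sub>0) \<bullet> e" if "s \<in> T" for s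
  proof -
    have "s \<in> C" using that closure_subset hull_subset by (fastforce simp: C_def)
    then have "(z\<^sub>0 - p) \<bullet> (s - p) \<le> 0"
      using any_closest_point_dot[OF \<open>convex C\<close> \<open>closed C\<close> p(1)] p(3) by blast
    moreover have "(s - z\<^sub>0) \<bullet> e = (s - p) \<bullet> e + e \<bullet> e" by (simp add: e_def algebra_simps)
    moreover have "(z\<^sub>0 - p) \<bullet> (s - p) = - ((s - p) \<bullet> e)"
      unfolding e_def by (metis inner_commute inner_minus_right minus_diff_eq)
    ultimately show ?thesis using e by (simp add: power2_norm_eq_inner[symmetric] power2_eq_square)
  qed
  then have "\<And>s. s \<in> T \<Longrightarrow> d \<le> (s - z\<^sub>0) \<bullet> (e /\<^sub>R d)"
    using d by (simp add: field_simps)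
  moreover have "norm (e /\<^sub>R d) = 1" using e d by simp
  ultimately show ?thesis using that by blast
qed

lemma two_linear_factors_if_order_sum_gt_1:
  fixes p :: "'a::idom poly"
  assumes "(\<Sum>z\<in>{z. S z \<and> poly p z = 0}. order z p) > 1"
  obtains z\<^sub>1 z\<^sub>2 where "S z\<^sub>1" "S z\<^sub>2" "[:-z\<^sub>1, 1:] * [:-z\<^sub>2, 1:] dvd p"
proof -
  define A where "A = {z. S z \<and> poly p z = 0}"
  have sum_A: "(\<Sum>z\<in>A. order z p) > 1" using assms by (simp add: A_def)
  show ?thesis
  proof (cases "\<exists>z\<in>A. 2 \<le> order z p")
    case True
    then obtain z where z: "z \<in> A" "2 \<le> order z p" by blast
    then have "[:-z, 1:] * [:-z, 1:] dvd p"
      using order_divides[of z 2 p] by (simp add: power2_eq_square)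
    with z(1) that show ?thesis by (auto simp: A_def)
  next
    case False
    then have "(\<Sum>z\<in>A. order z p) \<le> (\<Sum>z\<in>A. 1)" by (intro sum_mono) auto
    then have "card A > 1" "finite A" using sum_A by (auto intro: ccontr)
    then obtain z\<^sub>1 z\<^sub>2 where z: "z\<^sub>1 \<in> A" "z\<^sub>2 \<in> A" "z\<^sub>1 \<noteq> z\<^sub>2"
      by (metis card_le_Suc0_iff_eq not_less One_nat_def)
    then obtain r where r: "p = [:-z\<^sub>1, 1:] * r"
      by (auto simp: A_def poly_eq_0_iff_dvd elim: dvdE)
    then have "poly r z\<^sub>2 = 0" using z by (auto simp: A_def)
    then have "[:-z\<^sub>1, 1:] * [:-z\<^sub>2, 1:] dvd p"
      unfolding r poly_eq_0_iff_dvd by (rule mult_dvd_mono[OF dvd_refl])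
    with z that show ?thesis by (auto simp: A_def)
  qed
qed

lemma poly_eq_0_if_zero_on_large_set:
  fixes p :: "'a::idom poly"
  assumes "infinite S \<or> n \<le> card S" and "degree p < n" and "\<And>s. s \<in> S \<Longrightarrow> poly p s = 0"
  shows "p = 0"
proof (rule ccontr)
  assume "p \<noteq> 0"
  then have "finite {x. poly p x = 0}" "card {x. poly p x = 0} \<le> degree p"
    by (auto intro: poly_roots_finite card_poly_roots_bound)
  moreover have "S \<subseteq> {x. poly p x = 0}" using assms(3) by blast
  ultimately show False using assms(1,2) by (meson card_mono finite_subset le_trans not_less)
qed

locale finite_moments =
  fixes \<mu> :: "complex measure"
  assumes sets_eq_borel: "sets \<mu> = sets borel"
    and integrable_norm_power: "\<And>k::nat. integrable \<mu> (\<lambda>z. norm z ^ k)"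
begin

lemma space_eq_UNIV: "space \<mu> = UNIV"
  using sets_eq_imp_space_eq[OF sets_eq_borel] by simp

lemma borel_measurable_continuous:
  "continuous_on UNIV h \<Longrightarrow> h \<in> borel_measurable \<mu>"
  by (simp add: measurable_cong_sets[OF sets_eq_borel refl] borel_measurable_continuous_onI)

lemma integrable_poly_mult_cnj: "integrable \<mu> (\<lambda>z. poly f z * cnj (poly g z))"
proof -
  define B where "B z = (\<Sum>i\<le>degree (f * g). norm (coeff (f * g) i) * norm z ^ i)"
    for z :: complex
  have "integrable \<mu> B"
    unfolding B_def by (auto intro!: Bochner_Integration.integrable_sum integrable_norm_power)
  then show ?thesis
  proof (rule Bochner_Integration.integrable_bound)
    show "(\<lambda>z. poly f z * cnj (poly g z)) \<in> borel_measurable \<mu>"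
      by (intro borel_measurable_continuous continuous_intros)
    have "norm (poly f z * cnj (poly g z)) \<le> norm (B z)" for z
    proof -
      have "norm (poly f z * cnj (poly g z)) = norm (poly (f * g) z)" by (simp add: norm_mult)
      also have "\<dots> \<le> B z" unfolding B_def poly_altdef
        by (rule order_trans[OF norm_sum]) (simp add: norm_mult norm_power)
      finally show ?thesis by simp
    qed
    then show "AE z in \<mu>. norm (poly f z * cnj (poly g z)) \<le> norm (B z)" by simp
  qed
qed

lemma poly_inner_add_left: "poly_inner \<mu> (f + g) h = poly_inner \<mu> f h + poly_inner \<mu> g h"
  unfolding poly_inner_def by (simp add: distrib_right integrable_poly_mult_cnj)

lemma poly_inner_diff_left: "poly_inner \<mu> (f - g) h = poly_inner \<mu> f h - poly_inner \<mu> g h"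
  unfolding poly_inner_def by (simp add: left_diff_distrib integrable_poly_mult_cnj)

lemma poly_inner_smult_left: "poly_inner \<mu> (smult c f) h = c * poly_inner \<mu> f h"
  unfolding poly_inner_def by (simp add: mult.assoc)

lemma poly_inner_sum_left: "poly_inner \<mu> (\<Sum>i\<in>A. f i) h = (\<Sum>i\<in>A. poly_inner \<mu> (f i) h)"
  by (induction A rule: infinite_finite_induct)
    (auto simp: poly_inner_add_left poly_inner_def[of _ 0])

lemma cnj_poly_inner: "cnj (poly_inner \<mu> f g) = poly_inner \<mu> g f"
  unfolding poly_inner_def
  by (subst Bochner_Integration.integral_cnj[symmetric]) (simp add: mult.commute)

lemma poly_inner_add_right: "poly_inner \<mu> h (f + g) = poly_inner \<mu> h f + poly_inner \<mu> h g"
  by (metis cnj_poly_inner poly_inner_add_left complex_cnj_add)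

lemma poly_inner_smult_right: "poly_inner \<mu> h (smult c f) = cnj c * poly_inner \<mu> h f"
  by (metis cnj_poly_inner poly_inner_smult_left complex_cnj_mult)

lemma AE_in_msupp: "AE z in \<mu>. z \<in> msupp \<mu>"
proof -
  define F where "F = {ball x e | x e. e > 0 \<and> emeasure \<mu> (ball x e) = 0}"
  obtain F' where F': "F' \<subseteq> F" "countable F'" "\<Union>F' = \<Union>F"
    using Lindelof[of F] by (auto simp: F_def)
  have "S \<in> null_sets \<mu>" if "S \<in> F'" for S
    using that F'(1) by (auto simp: F_def null_sets_def sets_eq_borel)
  then have "\<Union>F' \<in> null_sets \<mu>" using null_sets_UN'[OF F'(2), of "\<lambda>S. S"] by simp
  then have "AE z in \<mu>. z \<notin> \<Union>F" using F'(3) by (metis AE_not_in)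
  moreover have "z \<in> msupp \<mu>" if "z \<notin> \<Union>F" for z
    using that by (auto simp: msupp_def F_def zero_less_iff_neq_zero) (metis centre_in_ball)
  ultimately show ?thesis by (auto elim: eventually_mono)
qed

lemma zero_on_msupp_if_AE_zero:
  fixes h :: "complex \<Rightarrow> 'b::real_normed_vector"
  assumes "continuous_on UNIV h" and "AE z in \<mu>. h z = 0" and "s \<in> msupp \<mu>"
  shows "h s = 0"
proof (rule ccontr)
  define U where "U = {z. h z \<noteq> 0}"
  assume "h s \<noteq> 0"
  moreover have "open U" unfolding U_def using assms(1) by (intro open_Collect_neq) auto
  ultimately obtain e where "e > 0" "ball s e \<subseteq> U" by (auto simp: U_def open_contains_ball)
  moreover have U: "U \<in> sets \<mu>" using \<open>open U\<close> by (simp add: sets_eq_borel)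
  moreover have "emeasure \<mu> U = 0"
    using AE_iff_measurable[OF U] assms(2) by (simp add: U_def space_eq_UNIV)
  ultimately have "emeasure \<mu> (ball s e) = 0" by (metis emeasure_mono le_zero_eq)
  then show False using assms(3) \<open>e > 0\<close> by (auto simp: msupp_def)
qed

lemma zero_on_msupp_if_integral_eq_0:
  fixes g :: "complex \<Rightarrow> real"
  assumes "continuous_on UNIV g" and "integrable \<mu> g" and "\<And>z. z \<in> msupp \<mu> \<Longrightarrow> 0 \<le> g z"
    and "integral\<^sup>L \<mu> g = 0" and "s \<in> msupp \<mu>"
  shows "g s = 0"
proof (rule zero_on_msupp_if_AE_zero[OF assms(1) _ assms(5)])
  have "AE z in \<mu>. 0 \<le> g z" using AE_in_msupp by (auto elim: eventually_mono intro: assms(3))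
  then show "AE z in \<mu>. g z = 0" using integral_nonneg_eq_0_iff_AE[OF assms(2)] assms(4) by simp
qed

lemma zero_on_msupp_if_poly_inner_self_eq_0:
  assumes "poly_inner \<mu> p p = 0" and "s \<in> msupp \<mu>"
  shows "poly p s = 0"
proof -
  have norm_square: "poly p z * cnj (poly p z) = of_real ((cmod (poly p z))\<^sup>2)" for z
    by (rule complex_norm_square[symmetric])
  have "poly_inner \<mu> p p = (\<integral>z. of_real ((cmod (poly p z))\<^sup>2) \<partial>\<mu>)"
    unfolding poly_inner_def norm_square ..
  also have "\<dots> = of_real (\<integral>z. (cmod (poly p z))\<^sup>2 \<partial>\<mu>)"
    by (rule integral_complex_of_real)
  finally have integral: "(\<integral>z. (cmod (poly p z))\<^sup>2 \<partial>\<mu>) = 0" using assms(1) by simp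
  have integrable: "integrable \<mu> (\<lambda>z. (cmod (poly p z))\<^sup>2)"
    using integrable_norm[OF integrable_poly_mult_cnj[of p p]]
    by (simp add: norm_mult power2_eq_square)
  have "continuous_on UNIV (\<lambda>z. (cmod (poly p z))\<^sup>2)" by (intro continuous_intros)
  then have "(cmod (poly p s))\<^sup>2 = 0"
    by (rule zero_on_msupp_if_integral_eq_0[OF _ integrable _ integral assms(2)]) simp
  then show ?thesis by simp
qed

lemma poly_inner_self_neq_0:
  assumes "infinite (msupp \<mu>) \<or> n \<le> card (msupp \<mu>)" and "degree p < n" and "p \<noteq> 0"
  shows "poly_inner \<mu> p p \<noteq> 0"
  using poly_eq_0_if_zero_on_large_set[OF assms(1,2)] zero_on_msupp_if_poly_inner_self_eq_0 assms(3)
  by blast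

lemma monic_OP_unique:
  assumes "infinite (msupp \<mu>) \<or> n \<le> card (msupp \<mu>)"
    and "is_monic_OP \<mu> n p" and "is_monic_OP \<mu> n p'"
  shows "p = p'"
proof (rule ccontr)
  assume "p \<noteq> p'"
  moreover have "\<forall>k\<ge>n. coeff (p - p') k = 0"
    using assms(2,3) by (auto simp: is_monic_OP_def coeff_eq_0 le_less)
  ultimately have "degree (p - p') < n" by (intro degree_lessI) auto
  moreover have "poly_inner \<mu> (p - p') (p - p') = 0"
    using \<open>degree (p - p') < n\<close> assms(2,3) by (simp add: poly_inner_diff_left is_monic_OP_def)
  ultimately show False using poly_inner_self_neq_0[OF assms(1)] \<open>p \<noteq> p'\<close> by force
qed

lemma monic_OP_orthogonal:
  assumes "is_monic_OP \<mu> k p" and "is_monic_OP \<mu> j q" and "j \<noteq> k"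
  shows "poly_inner \<mu> p q = 0"
proof (cases "j < k")
  case True
  then show ?thesis using assms by (simp add: is_monic_OP_def)
next
  case False
  then have "poly_inner \<mu> q p = 0" using assms by (simp add: is_monic_OP_def)
  then show ?thesis by (metis cnj_poly_inner complex_cnj_zero)
qed

lemma poly_inner_eq_0_if_orthogonal_to_monic_basis:
  assumes "\<And>k. k < m \<Longrightarrow> degree (Q k) = k" and "\<And>k. k < m \<Longrightarrow> lead_coeff (Q k) = 1"
    and "\<And>k. k < m \<Longrightarrow> poly_inner \<mu> p (Q k) = 0" and "degree q < m"
  shows "poly_inner \<mu> p q = 0"
  using assms
proof (induction m arbitrary: q)
  case 0
  then show ?case by simp
next
  case (Suc m)
  show ?case
  proof (cases "degree q < m")
    case True
    then show ?thesis using Suc by simp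
  next
    case False
    define r where "r = q - smult (lead_coeff q) (Q m)"
    have "degree q = m" using False Suc.prems(4) by simp
    then have "\<forall>k\<ge>m. coeff r k = 0" using Suc.prems(1,2)[of m]
      by (auto simp: r_def coeff_eq_0 le_less)
    then have "r = 0 \<or> degree r < m" by (auto intro: degree_lessI)
    then have "poly_inner \<mu> p r = 0" using Suc by (auto simp: poly_inner_def[of _ _ 0])
    have "poly_inner \<mu> p q = poly_inner \<mu> p (smult (lead_coeff q) (Q m) + r)"
      by (simp add: r_def)
    also have "\<dots> = cnj (lead_coeff q) * poly_inner \<mu> p (Q m) + poly_inner \<mu> p r"
      by (simp only: poly_inner_add_right poly_inner_smult_right)
    finally show ?thesis using Suc.prems(3)[of m] \<open>poly_inner \<mu> p r = 0\<close> by simp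
  qed
qed

lemma monic_OP_exists:
  assumes defined: "infinite (msupp \<mu>) \<or> n \<le> card (msupp \<mu>)"
    and lower: "\<And>k. k < n \<Longrightarrow> is_monic_OP \<mu> k (Q k)"
  shows "\<exists>p. is_monic_OP \<mu> n p"
proof -
  have deg_Q: "degree (Q k) = k" "lead_coeff (Q k) = 1" if "k < n" for k
    using lower[OF that] by (auto simp: is_monic_OP_def)
  define c where "c k = poly_inner \<mu> (monom 1 n) (Q k) / poly_inner \<mu> (Q k) (Q k)" for k
  define p where "p = monom 1 n - (\<Sum>k<n. smult (c k) (Q k))"
  have coeff_p: "coeff p k = (if k = n then 1 else 0)" if "n \<le> k" for k
    using that deg_Q by (auto simp: p_def coeff_sum coeff_monom coeff_eq_0 intro!: sum.neutral)
  then have "degree p = n"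
    by (intro antisym degree_le le_degree) auto
  moreover have "lead_coeff p = 1" using coeff_p calculation by simp
  moreover have orth_Q: "poly_inner \<mu> p (Q j) = 0" if "j < n" for j
  proof -
    have "poly_inner \<mu> (Q j) (Q j) \<noteq> 0"
      using poly_inner_self_neq_0[OF defined] deg_Q that by (metis one_neq_zero leading_coeff_0_iff)
    have "poly_inner \<mu> (\<Sum>k<n. smult (c k) (Q k)) (Q j) = (\<Sum>k<n. c k * poly_inner \<mu> (Q k) (Q j))"
      by (simp add: poly_inner_sum_left poly_inner_smult_left)
    also have "\<dots> = (\<Sum>k<n. if k = j then c j * poly_inner \<mu> (Q j) (Q j) else 0)"
      using that by (intro sum.cong) (auto intro: monic_OP_orthogonal lower)
    also have "\<dots> = poly_inner \<mu> (monom 1 n) (Q j)"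
      using that \<open>poly_inner \<mu> (Q j) (Q j) \<noteq> 0\<close> by (simp add: c_def)
    finally show ?thesis by (simp add: p_def poly_inner_diff_left)
  qed
  moreover have "poly_inner \<mu> p q = 0" if "degree q < n" for q
    by (rule poly_inner_eq_0_if_orthogonal_to_monic_basis[OF deg_Q orth_Q that])
  ultimately show ?thesis by (auto simp: is_monic_OP_def)
qed

lemma is_monic_OP_Phi:
  assumes "infinite (msupp \<mu>) \<or> n \<le> card (msupp \<mu>)"
  shows "is_monic_OP \<mu> n (Phi \<mu> n)"
  using assms
proof (induction n rule: less_induct)
  case (less n)
  then have "\<And>k. k < n \<Longrightarrow> is_monic_OP \<mu> k (Phi \<mu> k)" by force
  then obtain p where p: "is_monic_OP \<mu> n p" using monic_OP_exists[OF less.prems] by blast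
  then show ?case
    unfolding Phi_def by (rule theI) (use monic_OP_unique[OF less.prems _ p] in blast)
qed

lemma cofactor_zero_on_msupp:
  fixes z\<^sub>0 z\<^sub>1 z\<^sub>2 v :: complex and q :: "complex poly" and d :: real
  assumes orth: "poly_inner \<mu> ([:-z\<^sub>1, 1:] * [:-z\<^sub>2, 1:] * q) ([:-z\<^sub>0, 1:] * q) = 0"
    and v: "norm v = 1" and d: "d > 0" and sep: "\<And>s. s \<in> msupp \<mu> - {z\<^sub>0} \<Longrightarrow> d \<le> (s - z\<^sub>0) \<bullet> v"
    and z\<^sub>1: "dist z\<^sub>1 z\<^sub>0 < d / 2" and z\<^sub>2: "dist z\<^sub>2 z\<^sub>0 < d / 2"
    and s: "s \<in> msupp \<mu>"
  shows "poly ([:-z\<^sub>0, 1:] * q) s = 0"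
proof -
  define K where "K z = Re ((z - z\<^sub>1) * (z - z\<^sub>2) * cnj (z - z\<^sub>0) * cnj v)" for z
  define F where "F z = poly ([:-z\<^sub>1, 1:] * [:-z\<^sub>2, 1:] * q) z * cnj (poly ([:-z\<^sub>0, 1:] * q) z)" for z
  define g where "g z = Re (F z * cnj v)" for z
  have g_eq: "g z = K z * (cmod (poly q z))\<^sup>2" for z
  proof -
    have "F z * cnj v = (z - z\<^sub>1) * (z - z\<^sub>2) * cnj (z - z\<^sub>0) * cnj v * (poly q z * cnj (poly q z))"
      by (simp add: F_def algebra_simps)
    then have "F z * cnj v =
        (z - z\<^sub>1) * (z - z\<^sub>2) * cnj (z - z\<^sub>0) * cnj v * of_real ((cmod (poly q z))\<^sup>2)"
      by (simp only: complex_norm_square)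
    moreover have "Re (x * of_real r) = Re x * r" for x :: complex and r :: real by simp
    ultimately show ?thesis by (simp only: g_def K_def)
  qed
  have K_pos: "K z > 0" if "z \<in> msupp \<mu>" "z \<noteq> z\<^sub>0" for z
    unfolding K_def using that by (intro Re_two_roots_mult_cnj_pos[OF v d sep z\<^sub>1 z\<^sub>2]) auto
  have "integrable \<mu> F" unfolding F_def by (rule integrable_poly_mult_cnj)
  then have integrable_g: "integrable \<mu> g" and "integral\<^sup>L \<mu> g = Re (integral\<^sup>L \<mu> F * cnj v)"
    unfolding g_def by auto
  moreover have "integral\<^sup>L \<mu> F = 0" using orth unfolding F_def poly_inner_def .
  ultimately have integral_g: "integral\<^sup>L \<mu> g = 0" by simp
  have "K z\<^sub>0 = 0" by (simp add: K_def)
  then have g_nonneg: "0 \<le> g z" if "z \<in> msupp \<mu>" for z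
    using K_pos[OF that] by (cases "z = z\<^sub>0") (auto simp: g_eq)
  have "continuous_on UNIV g" unfolding g_def F_def by (intro continuous_intros)
  then have "g s = 0"
    by (rule zero_on_msupp_if_integral_eq_0[OF _ integrable_g g_nonneg integral_g s])
  then show ?thesis using K_pos[OF s] by (cases "s = z\<^sub>0") (auto simp: g_eq)
qed

end

theorem theoremA2p4:
  fixes \<mu> :: "complex measure" and z\<^sub>0 :: complex and \<delta> :: real and n :: nat
  assumes borel: "sets \<mu> = sets borel"
    and prob: "prob_space \<mu>"
    and moments: "\<And>k::nat. integrable \<mu> (\<lambda>z. norm z ^ k)"
    and pure_point: "emeasure \<mu> {z\<^sub>0} > 0"
    and delta_def: "\<delta> = infdist z\<^sub>0 (convex hull (msupp \<mu> - {z\<^sub>0}))"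
    and delta_pos: "\<delta> > 0"
    and defined: "infinite (msupp \<mu>) \<or> n \<le> card (msupp \<mu>)"
  shows "(\<Sum>z\<in>{z. dist z z\<^sub>0 < \<delta> / 2 \<and> poly (Phi \<mu> n) z = 0}. order z (Phi \<mu> n)) \<le> 1"
proof (rule ccontr)
  interpret finite_moments \<mu> using borel moments by unfold_locales
  have OP: "is_monic_OP \<mu> n (Phi \<mu> n)" using defined by (rule is_monic_OP_Phi)
  assume "\<not> ?thesis"
  then have "(\<Sum>z\<in>{z. dist z z\<^sub>0 < \<delta> / 2 \<and> poly (Phi \<mu> n) z = 0}. order z (Phi \<mu> n)) > 1"
    by simp
  then obtain z\<^sub>1 z\<^sub>2 where z: "dist z\<^sub>1 z\<^sub>0 < \<delta> / 2" "dist z\<^sub>2 z\<^sub>0 < \<delta> / 2"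
    and "[:-z\<^sub>1, 1:] * [:-z\<^sub>2, 1:] dvd Phi \<mu> n"
    by (rule two_linear_factors_if_order_sum_gt_1)
  then obtain q where Phi_eq: "Phi \<mu> n = [:-z\<^sub>1, 1:] * [:-z\<^sub>2, 1:] * q" by (elim dvdE)
  define L where "L = [:-z\<^sub>0, 1:] * q"
  have "q \<noteq> 0" using OP Phi_eq by (auto simp: is_monic_OP_def)
  then have "degree (Phi \<mu> n) = degree L + 1" "L \<noteq> 0"
    by (simp_all add: Phi_eq L_def degree_mult_eq del: mult_pCons_left)
  then have "degree L < n" using OP by (simp add: is_monic_OP_def)
  then have "poly_inner \<mu> (Phi \<mu> n) L = 0" using OP by (simp add: is_monic_OP_def)
  moreover obtain v where "norm v = 1" "\<And>s. s \<in> msupp \<mu> - {z\<^sub>0} \<Longrightarrow> \<delta> \<le> (s - z\<^sub>0) \<bullet> v"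
    using separating_unit_vector delta_pos unfolding delta_def by blast
  ultimately have "\<And>s. s \<in> msupp \<mu> \<Longrightarrow> poly L s = 0"
    unfolding L_def Phi_eq using cofactor_zero_on_msupp delta_pos z by blast
  then show False
    using poly_eq_0_if_zero_on_large_set[OF defined] \<open>degree L < n\<close> \<open>L \<noteq> 0\<close> by blast
qed

end
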